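(* Let $X$ be an infinite-dimensional complex Banach space and let $F \in \mathcal{B}(X)$ with $F^{n}$ of finite rank for some $n \in \mathbb{N}$. If $T \in \mathcal{B}(X)$ is lower semi-B-Fredholm and commutes with $F$, then $T+F$ is also lower semi-B-Fredholm.
   Context: $\mathcal{B}(X)$ is the algebra of bounded linear operators on $X$. An operator $S$ is lower semi-Fredholm if $\mathcal{R}(S)$ is closed and $\operatorname{codim}\mathcal{R}(S)<\infty$. $S$ is lower semi-B-Fredholm if there is $n\in\mathbb{N}$ such that $\mathcal{R}(S^n)$ is closed and the restriction $S_n$ of $S$ to $\mathcal{R}(S^n)$, viewed as a map $\mathcal{R}(S^n)\to\mathcal{R}(S^n)$, is lower semi-Fredholm. *)

theory Defs
  imports "HOL-Analysis.Analysis"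
begin

text \<open>Complex Banach spaces: a real Banach space with a compatible complex scalar
multiplication (the distribution has no complex vector space class).\<close>
class complex_banach = banach +
  fixes scaleC :: "complex \<Rightarrow> 'a \<Rightarrow> 'a"
  assumes scaleC_add_right: "scaleC a (x + y) = scaleC a x + scaleC a y"
    and scaleC_add_left: "scaleC (a + b) x = scaleC a x + scaleC b x"
    and scaleC_scaleC: "scaleC a (scaleC b x) = scaleC (a * b) x"
    and scaleC_one: "scaleC 1 x = x"
    and scaleR_scaleC: "scaleR r x = scaleC (complex_of_real r) x"
    and norm_scaleC: "norm (scaleC a x) = cmod a * norm x"

definition cspan :: "'a::complex_banach set \<Rightarrow> 'a set" where
  "cspan S = {\<Sum>x\<in>E. scaleC (c x) x | E c. finite E \<and> E \<subseteq> S}"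

definition bounded_clinear_op :: "('a::complex_banach \<Rightarrow> 'a) \<Rightarrow> bool" where
  "bounded_clinear_op f \<longleftrightarrow> bounded_linear f \<and> (\<forall>c x. f (scaleC c x) = scaleC c (f x))"

definition infinite_dimensional :: "'a::complex_banach itself \<Rightarrow> bool" where
  "infinite_dimensional _ \<longleftrightarrow> \<not> (\<exists>S::'a set. finite S \<and> cspan S = UNIV)"

definition finite_rank :: "('a::complex_banach \<Rightarrow> 'a) \<Rightarrow> bool" where
  "finite_rank f \<longleftrightarrow> (\<exists>S. finite S \<and> range f \<subseteq> cspan S)"

text \<open>The restriction of S to the (S-invariant) subspace M, viewed as a map M \<rightarrow> M,
is lower semi-Fredholm: its range S`M is closed and has finite codimension in M.\<close>
definition lower_semi_fredholm_on :: "'a::complex_banach set \<Rightarrow> ('a \<Rightarrow> 'a) \<Rightarrow> bool" where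
  "lower_semi_fredholm_on M S \<longleftrightarrow>
     closed (S ` M) \<and>
     (\<exists>E. finite E \<and> E \<subseteq> M \<and> M = {y + z | y z. y \<in> S ` M \<and> z \<in> cspan E})"

definition lower_semi_fredholm :: "('a::complex_banach \<Rightarrow> 'a) \<Rightarrow> bool" where
  "lower_semi_fredholm S \<longleftrightarrow> lower_semi_fredholm_on UNIV S"

definition lower_semi_B_fredholm :: "('a::complex_banach \<Rightarrow> 'a) \<Rightarrow> bool" where
  "lower_semi_B_fredholm T \<longleftrightarrow>
     (\<exists>n::nat. closed (range (T ^^ n)) \<and> lower_semi_fredholm_on (range (T ^^ n)) T)"

end

theory Submission
  imports Defs
begin

text \<open>Call an index n admissible for T if the range of T^n is closed and lies in the range of
T^(n+1) up to a finite-dimensional subspace. For bounded T this is a reformulation of lower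
semi-B-Fredholmness, and admissibility of n implies admissibility of all larger indices: by Kato's
lemma, proved with the open mapping theorem, an operator range that is contained in a closed
subspace with finite codimension is itself closed. If F commutes with T and range (F^k) is
finite-dimensional, the binomial expansion of (T + F)^m gives
range ((T + F)^m) \<subseteq> range (T^(m+1-k)) + range (F^k), and symmetrically, writing T = (T + F) - F,
range (T^m) \<subseteq> range ((T + F)^(m+1-k)) + range (F^k). Chaining these inclusions through the
stabilised ranges of T shows that every m > n + k is admissible for T + F.\<close>

lemma set_plus_eq_setcompr: "A + B = {x + y |x y. x \<in> A \<and> y \<in> B}"
  by (auto simp: set_plus_def)

lemma span_Un_set_plus: "span (A \<union> B) = span A + span B"
  by (simp add: span_Un set_plus_eq_setcompr)

lemma subspace_set_plus: "subspace A \<Longrightarrow> subspace B \<Longrightarrow> subspace (A + B)"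
  by (simp add: set_plus_eq_setcompr subspace_sums)

lemma subspace_plus_absorb:
  assumes "subspace U" "A \<subseteq> U" "0 \<in> A"
  shows "U + A = U"
  using assms by (force simp: set_plus_def intro: subspace_add)

lemma abs_mult_infdist_le_norm:
  assumes "subspace W" "w \<in> W"
  shows "\<bar>t\<bar> * infdist d W \<le> norm (w + t *\<^sub>R d)"
proof (cases "t = 0")
  case False
  have "- (1/t) *\<^sub>R w \<in> W"
    using assms by (simp add: subspace_scale subspace_neg)
  then have "infdist d W \<le> dist d (- (1/t) *\<^sub>R w)"
    by (rule infdist_le)
  also have "\<bar>t\<bar> * dist d (- (1/t) *\<^sub>R w) = norm (w + t *\<^sub>R d)"
  proof -
    have "w + t *\<^sub>R d = t *\<^sub>R (d - (- (1/t) *\<^sub>R w))"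
      using False by (simp add: algebra_simps)
    then show ?thesis by (simp add: dist_norm)
  qed
  finally show ?thesis by (simp add: mult_left_mono)
qed simp

lemma Cauchy_coefficient_if_Cauchy:
  fixes d :: "'a::real_normed_vector"
  assumes "subspace W" "infdist d W > 0" "\<And>n. w n \<in> W" "Cauchy (\<lambda>n. w n + t n *\<^sub>R d)"
  shows "Cauchy t"
proof (rule metric_CauchyI)
  fix e :: real assume "e > 0"
  then obtain N where N: "\<And>m n. m \<ge> N \<Longrightarrow> n \<ge> N \<Longrightarrow>
      dist (w m + t m *\<^sub>R d) (w n + t n *\<^sub>R d) < e * infdist d W"
    using assms(2,4) by (meson metric_CauchyD mult_pos_pos)
  have "dist (t m) (t n) < e" if "m \<ge> N" "n \<ge> N" for m n
  proof -
    have "\<bar>t m - t n\<bar> * infdist d W \<le> norm ((w m - w n) + (t m - t n) *\<^sub>R d)"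
      using assms(1,3) by (intro abs_mult_infdist_le_norm subspace_diff)
    also have "\<dots> = dist (w m + t m *\<^sub>R d) (w n + t n *\<^sub>R d)"
      by (simp add: dist_norm algebra_simps)
    finally have "\<bar>t m - t n\<bar> * infdist d W < e * infdist d W"
      using N[OF that] by linarith
    then show ?thesis
      using assms(2) by (simp add: dist_real_def)
  qed
  then show "\<exists>N. \<forall>m\<ge>N. \<forall>n\<ge>N. dist (t m) (t n) < e"
    by blast
qed

lemma closed_plus_span_singleton:
  fixes W :: "'a::banach set"
  assumes W: "closed W" "subspace W"
  shows "closed (W + span {d})"
proof (cases "d \<in> W")
  case True
  then have "W + span {d} = W"
    using W(2) by (intro subspace_plus_absorb span_minimal) (auto simp: span_zero)
  then show ?thesis
    using W(1) by simp
next
  case False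
  then have "infdist d W > 0"
    using W in_closed_iff_infdist_zero[of W d] infdist_nonneg[of d W] subspace_0[of W] by fastforce
  show ?thesis
    unfolding closed_sequential_limits
  proof (intro allI impI, elim conjE)
    fix f l assume f: "\<forall>n. f n \<in> W + span {d}" and lim: "f \<longlonglongrightarrow> l"
    obtain w t where w: "\<And>n. w n \<in> W" and f_eq: "f = (\<lambda>n. w n + t n *\<^sub>R d)"
      using f by (simp add: set_plus_def span_singleton) metis
    \<comment> \<open>d stays at positive distance from W, so the coefficients of d converge\<close>
    have "Cauchy t"
      using W(2) \<open>infdist d W > 0\<close> w LIMSEQ_imp_Cauchy[OF lim]
      unfolding f_eq by (rule Cauchy_coefficient_if_Cauchy)
    then obtain \<tau> where \<tau>: "t \<longlonglongrightarrow> \<tau>"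
      using Cauchy_convergent_iff convergent_def by blast
    have "(\<lambda>n. f n - t n *\<^sub>R d) \<longlonglongrightarrow> l - \<tau> *\<^sub>R d"
      by (intro tendsto_intros lim \<tau>)
    then have "l - \<tau> *\<^sub>R d \<in> W"
      using closed_sequentially[OF W(1)] w by (simp add: f_eq) blast
    moreover have "\<tau> *\<^sub>R d \<in> span {d}"
      by (simp add: span_base span_scale)
    ultimately show "l \<in> W + span {d}"
      using set_plus_intro by fastforce
  qed
qed

lemma closed_plus_span:
  fixes W :: "'a::banach set"
  assumes "finite D" "closed W" "subspace W"
  shows "closed (W + span D)"
  using assms(1)
proof (induction D rule: finite_induct)
  case empty
  then show ?case using assms by simp
next
  case (insert d D)
  have "W + span (insert d D) = (W + span D) + span {d}"
    using span_Un_set_plus[of D "{d}"] by (simp add: add.assoc)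
  then show ?case
    using insert.IH assms(3) by (simp add: closed_plus_span_singleton subspace_set_plus)
qed

lemma closed_span_finite:
  fixes D :: "'a::banach set"
  shows "finite D \<Longrightarrow> closed (span D)"
  using closed_plus_span[of D "{0}"] by simp

lemma span_insert_complement:
  assumes "subspace V" "V \<inter> span D \<subseteq> {0}" "d \<notin> V + span D"
  shows "V \<inter> span (insert d D) \<subseteq> {0}"
proof
  fix v assume v: "v \<in> V \<inter> span (insert d D)"
  then obtain c where c: "v - c *\<^sub>R d \<in> span D"
    by (auto simp: span_insert)
  show "v \<in> {0}"
  proof (cases "c = 0")
    case True
    then show ?thesis using c v assms(2) by auto
  next
    case False
    \<comment> \<open>otherwise d = (1/c) v - (1/c) (v - c d) would lie in V + span D\<close>
    have "(1/c) *\<^sub>R v + (- (1/c)) *\<^sub>R (v - c *\<^sub>R d) \<in> V + span D"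
      using v c assms(1) by (intro set_plus_intro subspace_scale span_scale) auto
    then show ?thesis
      using False assms(3) by (simp add: algebra_simps)
  qed
qed

lemma span_complement_subset:
  assumes "subspace V" "finite D"
  obtains D' where "D' \<subseteq> D" "V + span D' = V + span D" "V \<inter> span D' \<subseteq> {0}"
proof -
  have "\<exists>D'. D' \<subseteq> D \<and> V + span D' = V + span D \<and> V \<inter> span D' \<subseteq> {0}"
    using assms(2)
  proof (induction D rule: finite_induct)
    case empty
    show ?case by (intro exI[of _ "{}"]) simp
  next
    case (insert d D)
    then obtain D' where D': "D' \<subseteq> D" "V + span D' = V + span D" "V \<inter> span D' \<subseteq> {0}"
      by meson
    have sum_insert: "V + span (insert d E) = (V + span E) + span {d}" for E
      using span_Un_set_plus[of E "{d}"] by (simp add: add.assoc)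
    show ?case
    proof (cases "d \<in> V + span D'")
      case True
      have "V + span (insert d D) = (V + span D') + span {d}"
        using sum_insert[of D] D'(2) by simp
      also have "\<dots> = V + span D'"
        using True assms(1) by (intro subspace_plus_absorb span_minimal subspace_set_plus) (auto simp: span_zero)
      finally show ?thesis
        using D' by (intro exI[of _ D']) auto
    next
      case False
      have "V + span (insert d D') = V + span (insert d D)"
        using sum_insert[of D] sum_insert[of D'] D'(2) by simp
      then show ?thesis
        using D'(1) span_insert_complement[OF assms(1) D'(3) False]
        by (intro exI[of _ "insert d D'"]) auto
    qed
  qed
  then obtain D' where "D' \<subseteq> D" "V + span D' = V + span D" "V \<inter> span D' \<subseteq> {0}"
    by meson
  then show ?thesis by (rule that)
qed

lemma subspace_finite_complement:
  assumes "subspace V" "subspace Y" "V \<subseteq> Y" "Y \<subseteq> V + span D" "finite D"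
  obtains D' where "finite D'" "D' \<subseteq> Y" "Y = V + span D'" "V \<inter> span D' \<subseteq> {0}"
proof -
  obtain B where B: "B \<subseteq> Y \<inter> span D" "independent B" "Y \<inter> span D \<subseteq> span B"
    by (meson basis_exists)
  have "finite B"
    using independent_span_bound[OF \<open>finite D\<close> B(2)] B(1) by blast
  have "span B \<subseteq> Y"
    using B(1) assms(2) by (intro span_minimal) auto
  have "Y = V + span B"
  proof
    show "Y \<subseteq> V + span B"
    proof
      fix y assume "y \<in> Y"
      then obtain v w where vw: "y = v + w" "v \<in> V" "w \<in> span D"
        using assms(4) by (blast elim: set_plus_elim)
      have "y - v \<in> Y"
        using \<open>y \<in> Y\<close> vw(2) assms(2,3) by (blast intro: subspace_diff)
      then have "w \<in> span B"
        using vw B(3) by (simp add: subsetD)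
      then show "y \<in> V + span B"
        using vw by blast
    qed
    show "V + span B \<subseteq> Y"
      using assms(2,3) \<open>span B \<subseteq> Y\<close> by (auto simp: set_plus_def intro: subspace_add)
  qed
  obtain D' where D': "D' \<subseteq> B" "V + span D' = V + span B" "V \<inter> span D' \<subseteq> {0}"
    using span_complement_subset[OF assms(1) \<open>finite B\<close>] by blast
  moreover have "finite D'"
    using D'(1) \<open>finite B\<close> by (rule finite_subset)
  moreover have "D' \<subseteq> Y"
    using D'(1) B(1) by blast
  ultimately show ?thesis
    using that \<open>Y = V + span B\<close> by simp
qed

definition subset_mod_fin_dim :: "'a::real_vector set \<Rightarrow> 'a set \<Rightarrow> bool" where
  "subset_mod_fin_dim A B \<longleftrightarrow> (\<exists>D. finite D \<and> A \<subseteq> B + span D)"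

lemma subset_mod_fin_dimI: "finite D \<Longrightarrow> A \<subseteq> B + span D \<Longrightarrow> subset_mod_fin_dim A B"
  unfolding subset_mod_fin_dim_def by blast

lemma subset_imp_subset_mod_fin_dim: "A \<subseteq> B \<Longrightarrow> subset_mod_fin_dim A B"
  by (rule subset_mod_fin_dimI[of "{}"]) auto

lemma subset_mod_fin_dim_trans [trans]:
  assumes "subset_mod_fin_dim A B" "subset_mod_fin_dim B C"
  shows "subset_mod_fin_dim A C"
proof -
  obtain D E where D: "finite D" "A \<subseteq> B + span D" and E: "finite E" "B \<subseteq> C + span E"
    using assms unfolding subset_mod_fin_dim_def by meson
  note D(2)
  also have "B + span D \<subseteq> (C + span E) + span D"
    using E(2) by (intro set_plus_mono2) auto
  also have "\<dots> = C + span (E \<union> D)"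
    by (simp add: span_Un_set_plus add.assoc)
  finally show ?thesis
    using D(1) E(1) by (intro subset_mod_fin_dimI[of "E \<union> D"]) auto
qed

lemma subset_mod_fin_dim_plus_span:
  assumes "subset_mod_fin_dim A B" "finite K"
  shows "subset_mod_fin_dim (A + span K) B"
proof -
  obtain D where D: "finite D" "A \<subseteq> B + span D"
    using assms(1) unfolding subset_mod_fin_dim_def by meson
  then have "A + span K \<subseteq> (B + span D) + span K"
    by (intro set_plus_mono2) auto
  also have "\<dots> = B + span (D \<union> K)"
    by (simp add: span_Un_set_plus add.assoc)
  finally show ?thesis
    using D(1) assms(2) by (intro subset_mod_fin_dimI[of "D \<union> K"]) auto
qed

lemma linear_image_set_plus:
  assumes "linear f"
  shows "f ` (A + B) = f ` A + f ` B"
  unfolding set_plus_image image_image using linear_add[OF assms]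
  by (force simp: split_def)

lemma subset_mod_fin_dim_image:
  assumes "linear f" "subset_mod_fin_dim A B"
  shows "subset_mod_fin_dim (f ` A) (f ` B)"
proof -
  obtain D where D: "finite D" "A \<subseteq> B + span D"
    using assms(2) unfolding subset_mod_fin_dim_def by meson
  then have "f ` A \<subseteq> f ` B + span (f ` D)"
    using linear_image_set_plus[OF assms(1)] linear_span_image[OF assms(1)] by (metis image_mono)
  then show ?thesis
    using D(1) by (intro subset_mod_fin_dimI[of "f ` D"]) auto
qed

lemma Baire_closure_image_cball:
  fixes M :: "'a::real_normed_vector \<Rightarrow> 'b::banach"
  assumes "closed Y" "M ` X = Y" "Y \<noteq> {}"
  obtains n r y0 where "r > 0" "y0 \<in> Y" "Y \<inter> ball y0 r \<subseteq> closure (M ` (X \<inter> cball 0 (real n)))"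
proof -
  define C where "C n = closure (M ` (X \<inter> cball 0 (real n)))" for n
  have CY: "C n \<subseteq> Y" for n
    unfolding C_def by (rule closure_minimal) (use assms(1,2) in auto)
  have cover: "\<Union>(range C) = Y"
  proof
    show "\<Union>(range C) \<subseteq> Y"
      using CY by blast
    show "Y \<subseteq> \<Union>(range C)"
    proof
      fix y assume "y \<in> Y"
      then obtain x where x: "x \<in> X" "y = M x"
        using assms(2) by blast
      then have "y \<in> C (nat \<lceil>norm x\<rceil>)"
        unfolding C_def by (intro subsetD[OF closure_subset] image_eqI[of y M x]) auto
      then show "y \<in> \<Union>(range C)"
        by blast
    qed
  qed
  have "\<exists>n. top_of_set Y interior_of C n \<noteq> {}"
  proof (rule ccontr)
    assume "\<nexists>n. top_of_set Y interior_of C n \<noteq> {}"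
    moreover have "completely_metrizable_space (top_of_set Y)"
      using assms(1) closed_closedin completely_metrizable_space_closedin
        completely_metrizable_space_euclidean by blast
    moreover have "closedin (top_of_set Y) (C n)" for n
      using CY[of n] assms(1) by (simp add: C_def closedin_closed_eq)
    ultimately have "top_of_set Y interior_of \<Union>(range C) = {}"
      by (intro Baire_category_alt) auto
    with cover assms(3) show False
      using interior_of_topspace[of "top_of_set Y"] by simp
  qed
  then obtain n y0 where y0: "y0 \<in> top_of_set Y interior_of C n"
    by blast
  then obtain r where "r > 0" "ball y0 r \<inter> Y \<subseteq> top_of_set Y interior_of C n"
    using openin_interior_of[of "top_of_set Y" "C n"] unfolding openin_contains_ball by blast
  moreover have "y0 \<in> Y"
    using y0 interior_of_subset_topspace by fastforce
  ultimately show ?thesis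
    using that interior_of_subset[of "top_of_set Y" "C n"] by (force simp: C_def)
qed

lemma approx_lift_small:
  assumes "linear M" "subspace X" "subspace Y"
    and y0: "y0 \<in> Y" "Y \<inter> ball y0 r \<subseteq> closure (M ` (X \<inter> cball 0 c))"
    and y: "y \<in> Y" "norm y < r" and "e > 0"
  shows "\<exists>x\<in>X. norm x \<le> 2 * c \<and> norm (M x - y) < e"
proof -
  \<comment> \<open>subtract approximate preimages of y0 + y and of y0\<close>
  have "y0 + y \<in> closure (M ` (X \<inter> cball 0 c))"
    using y0 y \<open>subspace Y\<close> by (intro subsetD[OF y0(2)]) (auto simp: dist_norm subspace_add)
  then obtain z1 where "z1 \<in> M ` (X \<inter> cball 0 c)" "dist z1 (y0 + y) < e / 2"
    using \<open>e > 0\<close> unfolding closure_approachable by (meson half_gt_zero)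
  then obtain a1 where a1: "a1 \<in> X \<inter> cball 0 c" "dist (M a1) (y0 + y) < e / 2"
    by blast
  have "y0 \<in> closure (M ` (X \<inter> cball 0 c))"
    using y0(1) y(2) by (intro subsetD[OF y0(2)]) (simp add: le_less_trans[OF norm_ge_zero])
  then obtain z2 where "z2 \<in> M ` (X \<inter> cball 0 c)" "dist z2 y0 < e / 2"
    using \<open>e > 0\<close> unfolding closure_approachable by (meson half_gt_zero)
  then obtain a2 where a2: "a2 \<in> X \<inter> cball 0 c" "dist (M a2) y0 < e / 2"
    by blast
  have "M (a1 - a2) - y = (M a1 - (y0 + y)) - (M a2 - y0)"
    using linear_diff[OF \<open>linear M\<close>] by (simp add: algebra_simps)
  then have "norm (M (a1 - a2) - y) \<le> norm (M a1 - (y0 + y)) + norm (M a2 - y0)"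
    by (metis norm_triangle_ineq4)
  then have "norm (M (a1 - a2) - y) < e"
    using a1(2) a2(2) unfolding dist_norm by linarith
  moreover have "norm (a1 - a2) \<le> 2 * c"
    using a1(1) a2(1) norm_triangle_ineq4[of a1 a2] by simp
  moreover have "a1 - a2 \<in> X"
    using a1(1) a2(1) \<open>subspace X\<close> by (simp add: subspace_diff)
  ultimately show ?thesis
    by blast
qed

lemma approx_lift_rescale:
  fixes M :: "'a::real_normed_vector \<Rightarrow> 'b::real_normed_vector"
  assumes "linear M" "subspace X" "subspace Y" "r > 0"
    and small: "\<And>y e. y \<in> Y \<Longrightarrow> norm y < r \<Longrightarrow> e > 0 \<Longrightarrow> \<exists>x\<in>X. norm x \<le> c \<and> norm (M x - y) < e"
    and y: "y \<in> Y" "e > 0"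
  shows "\<exists>x\<in>X. norm x \<le> 2 * c / r * norm y \<and> norm (M x - y) < e"
proof (cases "y = 0")
  case True
  then show ?thesis
    using y(2) assms(1,2) by (intro bexI[of _ 0]) (auto simp: linear_0 subspace_0)
next
  case False
  define t where "t = r / (2 * norm y)"
  have "t > 0"
    using False assms(4) by (simp add: t_def)
  have "norm (t *\<^sub>R y) < r"
    using False assms(4) by (simp add: t_def)
  moreover have "t *\<^sub>R y \<in> Y"
    using assms(3) y(1) by (rule subspace_scale)
  ultimately obtain x where x: "x \<in> X" "norm x \<le> c" "norm (M x - t *\<^sub>R y) < e * t"
    using small y(2) \<open>t > 0\<close> by (meson mult_pos_pos)
  have "(1/t) *\<^sub>R x \<in> X"
    using assms(2) x(1) by (rule subspace_scale)
  moreover have "norm ((1/t) *\<^sub>R x) \<le> 2 * c / r * norm y"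
  proof -
    have "norm ((1/t) *\<^sub>R x) \<le> c / t"
      using x(2) \<open>t > 0\<close> by (simp add: divide_right_mono)
    also have "\<dots> = 2 * c / r * norm y"
      using False assms(4) by (simp add: t_def field_simps)
    finally show ?thesis .
  qed
  moreover have "norm (M ((1/t) *\<^sub>R x) - y) < e"
  proof -
    have "M ((1/t) *\<^sub>R x) - y = (1/t) *\<^sub>R (M x - t *\<^sub>R y)"
      using linear_scale[OF assms(1)] \<open>t > 0\<close> by (simp add: algebra_simps)
    then show ?thesis
      using x(3) \<open>t > 0\<close> by (simp add: divide_less_eq)
  qed
  ultimately show ?thesis
    by blast
qed

lemma approx_lift_bounded:
  fixes M :: "'a::real_normed_vector \<Rightarrow> 'b::banach"
  assumes "linear M" "subspace X" "closed Y" "M ` X = Y"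
  obtains K where "K \<ge> 0"
    "\<And>y e. y \<in> Y \<Longrightarrow> e > 0 \<Longrightarrow> \<exists>x\<in>X. norm x \<le> K * norm y \<and> norm (M x - y) < e"
proof -
  have "subspace Y"
    using linear_subspace_image[OF assms(1,2)] assms(4) by simp
  then have "Y \<noteq> {}"
    using subspace_0 by blast
  then obtain n r y0 where r: "r > 0" "y0 \<in> Y" "Y \<inter> ball y0 r \<subseteq> closure (M ` (X \<inter> cball 0 (real n)))"
    using Baire_closure_image_cball[OF assms(3,4)] by metis
  have "2 * (2 * real n) / r \<ge> 0"
    using r(1) by simp
  moreover note approx_lift_rescale[OF assms(1,2) \<open>subspace Y\<close> r(1)
      approx_lift_small[OF assms(1,2) \<open>subspace Y\<close> r(2,3)]]
  ultimately show ?thesis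
    using that by blast
qed

lemma geometric_series_in_closed_subspace:
  fixes x :: "nat \<Rightarrow> 'a::banach"
  assumes "closed X" "subspace X" "\<And>j. x j \<in> X" "\<And>j. norm (x j) \<le> c * (1/2) ^ j"
  shows "summable x" "suminf x \<in> X" "norm (suminf x) \<le> 2 * c"
proof -
  have geom: "summable (\<lambda>j. c * (1/2::real) ^ j)"
    by (intro summable_mult summable_geometric) simp
  have norms: "summable (\<lambda>j. norm (x j))"
    by (rule summable_comparison_test'[OF geom, of 0]) (use assms(4) in simp)
  then show "summable x"
    by (rule summable_norm_cancel)
  then have "(\<lambda>N. \<Sum>j<N. x j) \<longlonglongrightarrow> suminf x"
    by (rule summable_LIMSEQ)
  moreover have "(\<Sum>j<N. x j) \<in> X" for N
    using assms(2,3) by (simp add: subspace_sum)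
  ultimately show "suminf x \<in> X"
    by (rule closed_sequentially[OF assms(1), rotated])
  have "norm (suminf x) \<le> (\<Sum>j. norm (x j))"
    using norms by (rule summable_norm)
  also have "\<dots> \<le> (\<Sum>j. c * (1/2::real) ^ j)"
    using norms geom assms(4) by (intro suminf_le) auto
  also have "\<dots> = 2 * c"
    using suminf_mult[OF summable_geometric[of "1/2::real"], of c] suminf_geometric[of "1/2::real"]
    by simp
  finally show "norm (suminf x) \<le> 2 * c" .
qed

lemma approx_lift_iterate:
  assumes "M ` X \<subseteq> Y" "subspace Y" "K \<ge> 0"
    and approx: "\<And>y e. y \<in> Y \<Longrightarrow> e > 0 \<Longrightarrow> \<exists>x\<in>X. norm x \<le> K * norm y \<and> norm (M x - y) < e"
    and "y \<in> Y" "y \<noteq> 0"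
  obtains x where "\<And>j. x j \<in> X" "\<And>j. norm (x j) \<le> K * norm y * (1/2) ^ j" "(\<lambda>j. M (x j)) sums y"
proof -
  obtain g where g: "\<And>v e. v \<in> Y \<Longrightarrow> e > 0 \<Longrightarrow>
      g v e \<in> X \<and> norm (g v e) \<le> K * norm v \<and> norm (M (g v e) - v) < e"
    using approx by metis
  define e where "e j = norm y * (1/2) ^ Suc j" for j
  have "e j > 0" for j
    using \<open>y \<noteq> 0\<close> by (simp add: e_def)
  \<comment> \<open>v j is the residual left after j correction steps, x j the j-th correction\<close>
  define v where "v = rec_nat y (\<lambda>j w. w - M (g w (e j)))"
  define x where "x j = g (v j) (e j)" for j
  have v_Suc: "v (Suc j) = v j - M (x j)" for j
    by (simp add: v_def x_def)
  have v: "v j \<in> Y \<and> norm (v j) \<le> norm y * (1/2) ^ j" for j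
  proof (induction j)
    case 0
    then show ?case using \<open>y \<in> Y\<close> by (simp add: v_def)
  next
    case (Suc j)
    then have "x j \<in> X" "norm (M (x j) - v j) < e j"
      using g \<open>e j > 0\<close> by (auto simp: x_def)
    then show ?case
      using Suc assms(1,2) by (auto simp: v_Suc e_def norm_minus_commute intro: subspace_diff)
  qed
  have x: "x j \<in> X" "norm (x j) \<le> K * norm y * (1/2) ^ j" for j
    using g[of "v j" "e j"] v[of j] \<open>e j > 0\<close> mult_left_mono[OF _ \<open>K \<ge> 0\<close>]
    by (auto simp: x_def mult.assoc intro: order_trans)
  have "v \<longlonglongrightarrow> 0"
  proof (rule Lim_null_comparison)
    show "\<forall>\<^sub>F j in sequentially. norm (v j) \<le> norm y * (1/2) ^ j"
      using v by simp
    show "(\<lambda>j. norm y * (1/2::real) ^ j) \<longlonglongrightarrow> 0"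
      by (intro tendsto_mult_right_zero LIMSEQ_power_zero) simp
  qed
  then have "(\<lambda>j. v j - v (Suc j)) sums (v 0 - 0)"
    by (rule telescope_sums')
  moreover have "v 0 = y"
    by (simp add: v_def)
  ultimately have "(\<lambda>j. M (x j)) sums y"
    by (simp add: v_Suc)
  with x show ?thesis
    using that by blast
qed

lemma exact_lift_from_approx_lift:
  fixes M :: "'a::banach \<Rightarrow> 'b::real_normed_vector"
  assumes "bounded_linear M" "closed X" "subspace X" "subspace Y" "M ` X \<subseteq> Y" "K \<ge> 0"
    and approx: "\<And>y e. y \<in> Y \<Longrightarrow> e > 0 \<Longrightarrow> \<exists>x\<in>X. norm x \<le> K * norm y \<and> norm (M x - y) < e"
    and "y \<in> Y"
  shows "\<exists>x\<in>X. M x = y \<and> norm x \<le> 2 * K * norm y"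
proof (cases "y = 0")
  case True
  then show ?thesis
    using assms(1,3) by (intro bexI[of _ 0]) (auto simp: linear_simps subspace_0)
next
  case False
  then obtain x where x: "\<And>j. x j \<in> X" "\<And>j. norm (x j) \<le> K * norm y * (1/2) ^ j"
    and sums: "(\<lambda>j. M (x j)) sums y"
    using approx_lift_iterate[OF assms(5,4,6) approx \<open>y \<in> Y\<close>] by metis
  note sum_x = geometric_series_in_closed_subspace[OF assms(2,3) x]
  have "M (suminf x) = y"
    using bounded_linear.suminf[OF assms(1) sum_x(1)] sums sums_unique by metis
  then show ?thesis
    using sum_x(2,3) by (auto simp: mult_ac)
qed

lemma open_mapping_bound:
  fixes M :: "'a::banach \<Rightarrow> 'b::banach"
  assumes "bounded_linear M" "closed X" "subspace X" "closed Y" "M ` X = Y"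
  obtains C where "\<And>y. y \<in> Y \<Longrightarrow> \<exists>x\<in>X. M x = y \<and> norm x \<le> C * norm y"
proof -
  have "linear M"
    using assms(1) by (rule bounded_linear.linear)
  obtain K where "K \<ge> 0"
    "\<And>y e. y \<in> Y \<Longrightarrow> e > 0 \<Longrightarrow> \<exists>x\<in>X. norm x \<le> K * norm y \<and> norm (M x - y) < e"
    using approx_lift_bounded[OF \<open>linear M\<close> assms(3,4,5)] by metis
  moreover have "subspace Y"
    using linear_subspace_image[OF \<open>linear M\<close> assms(3)] assms(5) by simp
  ultimately show ?thesis
    using exact_lift_from_approx_lift[OF assms(1,2,3) _ _ \<open>K \<ge> 0\<close>] assms(5) that by blast
qed

lemma complement_component_bound:
  fixes L :: "'a::banach \<Rightarrow> 'b::banach"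
  assumes "bounded_linear L" "finite D" "closed (range L + span D)" "range L \<inter> span D \<subseteq> {0}"
  obtains C where "\<And>a s. s \<in> span D \<Longrightarrow> norm s \<le> C * norm (L a + s)"
proof -
  define M where "M p = L (fst p) + snd p" for p :: "'a \<times> 'b"
  have "bounded_linear M"
    unfolding M_def
    by (intro bounded_linear_add bounded_linear_compose[OF assms(1)] bounded_linear_fst bounded_linear_snd)
  moreover have "closed (UNIV \<times> span D)"
    using assms(2) by (simp add: closed_Times closed_span_finite)
  moreover have "subspace (UNIV \<times> span D)"
    by (simp add: subspace_Times)
  moreover have "M ` (UNIV \<times> span D) = range L + span D"
    unfolding set_plus_image M_def by force
  ultimately obtain C where C: "\<And>y. y \<in> range L + span D \<Longrightarrow>
      \<exists>p\<in>UNIV \<times> span D. M p = y \<and> norm p \<le> C * norm y"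
    using open_mapping_bound assms(3) by metis
  have "norm s \<le> C * norm (L a + s)" if "s \<in> span D" for a s
  proof -
    have "L a + s \<in> range L + span D"
      using that by (intro set_plus_intro) auto
    then obtain p where "p \<in> UNIV \<times> span D" "M p = L a + s" "norm p \<le> C * norm (L a + s)"
      using C by blast
    then have p: "snd p \<in> span D" "L (fst p) + snd p = L a + s" "norm p \<le> C * norm (L a + s)"
      unfolding M_def by (auto simp: mem_Times_iff)
    \<comment> \<open>the decomposition into range L and span D is unique\<close>
    have "s - snd p = (L (fst p) + snd p) - L a - snd p"
      using p(2) by simp
    also have "\<dots> = L (fst p - a)"
      using linear_diff[OF bounded_linear.linear[OF assms(1)]] by simp
    finally have "s - snd p \<in> range L \<inter> span D"
      using that p(1) span_diff by (metis IntI rangeI)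
    then have "s = snd p"
      using assms(4) by auto
    then show ?thesis
      using p(3) norm_snd_le[of "snd p" "fst p"] by simp
  qed
  then show ?thesis
    using that by blast
qed

lemma closed_range_if_complement_component_bound:
  fixes L :: "'a::real_normed_vector \<Rightarrow> 'b::real_normed_vector"
  assumes "linear L" "closed (range L + S)" "subspace S"
    and bound: "\<And>a s. s \<in> S \<Longrightarrow> norm s \<le> C * norm (L a + s)"
  shows "closed (range L)"
  unfolding closed_sequential_limits
proof (intro allI impI, elim conjE)
  fix f l assume f: "\<forall>n. f n \<in> range L" and lim: "f \<longlonglongrightarrow> l"
  then have "\<And>n. f n \<in> range L + S"
    using subspace_0[OF assms(3)] set_plus_intro[of _ "range L" 0 S] by simp
  then have "l \<in> range L + S"
    using lim by (rule closed_sequentially[OF assms(2)])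
  then obtain x s where l: "l = L x + s" "s \<in> S"
    by (auto elim: set_plus_elim)
  have "\<forall>n. \<exists>z. f n = L z"
    using f by blast
  then obtain z where z: "\<And>n. f n = L (z n)"
    by metis
  have "f n - l = L (z n - x) + - s" for n
    using l(1) z[of n] linear_diff[OF assms(1)] by (simp add: algebra_simps)
  then have "norm s \<le> C * norm (f n - l)" for n
    using bound[of "- s" "z n - x"] l(2) assms(3) by (simp add: subspace_neg)
  moreover have "(\<lambda>n. C * norm (f n - l)) \<longlonglongrightarrow> 0"
    using lim by (intro tendsto_mult_right_zero tendsto_norm_zero LIM_zero)
  ultimately have "norm s \<le> 0"
    by (intro LIMSEQ_le_const) auto
  then show "l \<in> range L"
    using l(1) by simp
qed

lemma closed_range_if_subset_mod_fin_dim: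
  fixes L :: "'a::banach \<Rightarrow> 'b::banach"
  assumes "bounded_linear L" "closed Y" "subspace Y" "range L \<subseteq> Y"
    and "subset_mod_fin_dim Y (range L)"
  shows "closed (range L)"
proof -
  have "linear L"
    using assms(1) by (rule bounded_linear.linear)
  then have "subspace (range L)"
    using linear_subspace_image subspace_UNIV by blast
  obtain D where "finite D" "Y \<subseteq> range L + span D"
    using assms(5) unfolding subset_mod_fin_dim_def by meson
  then obtain D' where D': "finite D'" "Y = range L + span D'" "range L \<inter> span D' \<subseteq> {0}"
    using subspace_finite_complement[OF \<open>subspace (range L)\<close> assms(3,4)] by metis
  then obtain C where "\<And>a s. s \<in> span D' \<Longrightarrow> norm s \<le> C * norm (L a + s)"
    using complement_component_bound[OF assms(1)] assms(2) by metis
  then show ?thesis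
    using closed_range_if_complement_component_bound[OF \<open>linear L\<close>] D'(2) assms(2) subspace_span
    by metis
qed

lemma linear_funpow:
  fixes f :: "'a::real_vector \<Rightarrow> 'a"
  shows "linear f \<Longrightarrow> linear (f ^^ n)"
proof (induction n)
  case 0
  then show ?case by (simp add: linear_iff)
next
  case (Suc n)
  then show ?case using linear_compose[OF Suc.IH Suc.prems] by (simp add: comp_def)
qed

lemma bounded_linear_funpow:
  fixes f :: "'a::real_normed_vector \<Rightarrow> 'a"
  shows "bounded_linear f \<Longrightarrow> bounded_linear (f ^^ n)"
proof (induction n)
  case 0
  then show ?case by (simp add: id_def)
next
  case (Suc n)
  then show ?case using bounded_linear_compose[OF Suc.prems Suc.IH] by (simp add: comp_def)
qed

lemma funpow_comp_commute:
  assumes "f \<circ> g = g \<circ> f"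
  shows "f ^^ n \<circ> g ^^ m = g ^^ m \<circ> f ^^ n"
proof -
  have power_commute: "h ^^ i \<circ> k = k \<circ> h ^^ i" if "h \<circ> k = k \<circ> h" for h k :: "'a \<Rightarrow> 'a" and i
  proof (induction i)
    case 0
    show ?case by simp
  next
    case (Suc i)
    have "h ^^ Suc i \<circ> k = h \<circ> (h ^^ i \<circ> k)"
      by (simp only: funpow.simps comp_assoc)
    also have "\<dots> = (h \<circ> k) \<circ> h ^^ i"
      by (simp only: Suc.IH comp_assoc)
    also have "\<dots> = k \<circ> h ^^ Suc i"
      by (simp only: that funpow.simps comp_assoc)
    finally show ?case .
  qed
  have "g \<circ> f ^^ n = f ^^ n \<circ> g"
    using power_commute[OF assms] by simp
  from power_commute[OF this] show ?thesis
    by simp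
qed

lemma range_funpow_mono:
  fixes f :: "'a \<Rightarrow> 'a"
  assumes "m \<le> n"
  shows "range (f ^^ n) \<subseteq> range (f ^^ m)"
proof -
  have "f ^^ n = f ^^ m \<circ> f ^^ (n - m)"
    using assms by (simp flip: funpow_add)
  then show ?thesis
    by auto
qed

lemma image_range_funpow: "f ` range (f ^^ n) = range (f ^^ Suc n)"
  by (simp add: image_comp)

lemma range_funpow_add_subset_span:
  fixes A B :: "'a::real_vector \<Rightarrow> 'a"
  assumes "linear A" "linear B" "A \<circ> B = B \<circ> A"
  shows "range ((\<lambda>x. A x + B x) ^^ m) \<subseteq> span {(A ^^ (m - j)) ((B ^^ j) y) | j y. j \<le> m}"
proof -
  define G where "G m = {(A ^^ (m - j)) ((B ^^ j) y) | j y. j \<le> m}" for m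
  have AG: "A ` G m \<subseteq> G (Suc m)" for m
  proof
    fix z assume "z \<in> A ` G m"
    then obtain j y where "j \<le> m" "z = (A ^^ (Suc m - j)) ((B ^^ j) y)"
      by (auto simp: G_def Suc_diff_le)
    then show "z \<in> G (Suc m)"
      unfolding G_def by (intro CollectI exI[of _ j] exI[of _ y]) simp
  qed
  have BG: "B ` G m \<subseteq> G (Suc m)" for m
  proof
    fix z assume "z \<in> B ` G m"
    then obtain j y where j: "j \<le> m" "z = B ((A ^^ (m - j)) ((B ^^ j) y))"
      by (auto simp: G_def)
    then have "z = (A ^^ (Suc m - Suc j)) ((B ^^ Suc j) y)"
      using fun_cong[OF funpow_comp_commute[OF assms(3), of "m - j" 1]] by simp
    then show "z \<in> G (Suc m)"
      using j(1) unfolding G_def by (intro CollectI exI[of _ "Suc j"] exI[of _ y]) simp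
  qed
  have "((\<lambda>x. A x + B x) ^^ m) x \<in> span (G m)" for x
  proof (induction m)
    case 0
    have "x \<in> G 0"
      unfolding G_def by (intro CollectI exI[of _ 0] exI[of _ x]) simp
    then show ?case by (simp add: span_base)
  next
    case (Suc m)
    have "A ` span (G m) \<subseteq> span (G (Suc m))" "B ` span (G m) \<subseteq> span (G (Suc m))"
      using AG BG linear_span_image[OF assms(1)] linear_span_image[OF assms(2)] span_mono
      by metis+
    then show ?case
      using Suc.IH by (auto intro: span_add)
  qed
  then show ?thesis
    unfolding G_def by blast
qed

lemma range_funpow_add_subset:
  fixes A B :: "'a::real_vector \<Rightarrow> 'a"
  assumes "linear A" "linear B" "A \<circ> B = B \<circ> A" "range (B ^^ k) \<subseteq> K" "subspace K"
  shows "range ((\<lambda>x. A x + B x) ^^ m) \<subseteq> range (A ^^ (m + 1 - k)) + K"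
proof -
  have "subspace (range (A ^^ (m + 1 - k)))"
    using linear_subspace_image[OF linear_funpow[OF assms(1)] subspace_UNIV] .
  moreover have "(A ^^ (m - j)) ((B ^^ j) y) \<in> range (A ^^ (m + 1 - k)) + K" if "j \<le> m" for j y
  proof (cases "j < k")
    case True
    then have "A ^^ (m - j) = A ^^ (m + 1 - k) \<circ> A ^^ (m - j - (m + 1 - k))"
      using that by (simp flip: funpow_add)
    then have "(A ^^ (m - j)) ((B ^^ j) y) \<in> range (A ^^ (m + 1 - k))"
      by auto
    then show ?thesis
      using set_plus_intro[of _ _ 0 K] subspace_0[OF assms(5)] by simp
  next
    case False
    then have "B ^^ j = B ^^ k \<circ> B ^^ (j - k)"
      by (simp flip: funpow_add)
    then have "(A ^^ (m - j)) ((B ^^ j) y) = (B ^^ k) ((A ^^ (m - j)) ((B ^^ (j - k)) y))"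
      using fun_cong[OF funpow_comp_commute[OF assms(3), of "m - j" k]] by simp
    then have "(A ^^ (m - j)) ((B ^^ j) y) \<in> K"
      using assms(4) by auto
    then show ?thesis
      using set_plus_intro[of 0 _ _ K] subspace_0[OF \<open>subspace (range (A ^^ (m + 1 - k)))\<close>]
      by simp
  qed
  ultimately have "span {(A ^^ (m - j)) ((B ^^ j) y) | j y. j \<le> m} \<subseteq> range (A ^^ (m + 1 - k)) + K"
    using assms(5) by (intro span_minimal subspace_set_plus) auto
  then show ?thesis
    using range_funpow_add_subset_span[OF assms(1-3)] by blast
qed

lemma funpow_uminus:
  fixes F :: "'a::real_vector \<Rightarrow> 'a"
  assumes "linear F"
  shows "((\<lambda>x. - F x) ^^ j) x = (-1) ^ j *\<^sub>R (F ^^ j) x"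
proof (induction j)
  case (Suc j)
  have "((\<lambda>x. - F x) ^^ Suc j) x = - F ((-1) ^ j *\<^sub>R (F ^^ j) x)"
    using Suc by simp
  also have "\<dots> = (-1) ^ Suc j *\<^sub>R (F ^^ Suc j) x"
    using linear_scale[OF assms] by simp
  finally show ?case .
qed simp

text \<open>The second conjunct says that the essential descent of T is at most n.\<close>

definition closed_range_ess_descent :: "('a::real_normed_vector \<Rightarrow> 'a) \<Rightarrow> nat \<Rightarrow> bool" where
  "closed_range_ess_descent T n \<longleftrightarrow>
     closed (range (T ^^ n)) \<and> subset_mod_fin_dim (range (T ^^ n)) (range (T ^^ Suc n))"

lemma closed_range_ess_descent_Suc:
  fixes T :: "'a::banach \<Rightarrow> 'a"
  assumes "bounded_linear T" "closed_range_ess_descent T n"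
  shows "closed_range_ess_descent T (Suc n)"
proof -
  have lin: "linear (T ^^ n)" for n
    using bounded_linear_funpow[OF assms(1)] bounded_linear.linear by blast
  have "closed (range (T ^^ Suc n))"
  proof (rule closed_range_if_subset_mod_fin_dim)
    show "bounded_linear (T ^^ Suc n)"
      using assms(1) by (rule bounded_linear_funpow)
    show "closed (range (T ^^ n))" "subset_mod_fin_dim (range (T ^^ n)) (range (T ^^ Suc n))"
      using assms(2) unfolding closed_range_ess_descent_def by auto
    show "subspace (range (T ^^ n))"
      using linear_subspace_image[OF lin subspace_UNIV] .
    show "range (T ^^ Suc n) \<subseteq> range (T ^^ n)"
      by (rule range_funpow_mono) simp
  qed
  moreover have "subset_mod_fin_dim (T ` range (T ^^ n)) (T ` range (T ^^ Suc n))"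
    using subset_mod_fin_dim_image[OF bounded_linear.linear[OF assms(1)]] assms(2)
    unfolding closed_range_ess_descent_def by blast
  then have "subset_mod_fin_dim (range (T ^^ Suc n)) (range (T ^^ Suc (Suc n)))"
    by (simp only: image_range_funpow)
  ultimately show ?thesis
    unfolding closed_range_ess_descent_def ..
qed

lemma closed_range_ess_descent_mono:
  fixes T :: "'a::banach \<Rightarrow> 'a"
  assumes "bounded_linear T" "closed_range_ess_descent T n" "n \<le> m"
  shows "closed_range_ess_descent T m"
  using assms(3,2) by (induction m rule: dec_induct) (auto intro: closed_range_ess_descent_Suc[OF assms(1)])

lemma subset_mod_fin_dim_range_funpow:
  fixes T :: "'a::banach \<Rightarrow> 'a"
  assumes "bounded_linear T" "closed_range_ess_descent T n" "n \<le> a"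
  shows "subset_mod_fin_dim (range (T ^^ a)) (range (T ^^ b))"
proof (cases "b \<le> a")
  case True
  then show ?thesis
    by (intro subset_imp_subset_mod_fin_dim range_funpow_mono)
next
  case False
  have "subset_mod_fin_dim (range (T ^^ a)) (range (T ^^ (a + d)))" for d
  proof (induction d)
    case 0
    then show ?case by (simp add: subset_imp_subset_mod_fin_dim)
  next
    case (Suc d)
    have "closed_range_ess_descent T (a + d)"
      using closed_range_ess_descent_mono[OF assms(1,2)] assms(3) by simp
    then show ?case
      using Suc.IH unfolding closed_range_ess_descent_def
      by (auto intro: subset_mod_fin_dim_trans)
  qed
  from this[of "b - a"] show ?thesis
    using False by simp
qed

lemma range_funpow_add_commuting:
  fixes T F :: "'a::real_vector \<Rightarrow> 'a"
  assumes "linear T" "linear F" "T \<circ> F = F \<circ> T" "range (F ^^ k) \<subseteq> span K"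
  shows "range ((\<lambda>x. T x + F x) ^^ a) \<subseteq> range (T ^^ (a + 1 - k)) + span K"
    and "range (T ^^ a) \<subseteq> range ((\<lambda>x. T x + F x) ^^ (a + 1 - k)) + span K"
proof -
  show "range ((\<lambda>x. T x + F x) ^^ a) \<subseteq> range (T ^^ (a + 1 - k)) + span K"
    using assms by (intro range_funpow_add_subset) auto
  define S where "S = (\<lambda>x. T x + F x)"
  have "linear S" "linear (\<lambda>x. - F x)"
    using assms(1,2) by (simp_all add: S_def linear_compose_add linear_compose_neg)
  moreover have "S \<circ> (\<lambda>x. - F x) = (\<lambda>x. - F x) \<circ> S"
    using fun_cong[OF assms(3)]
    by (simp add: S_def fun_eq_iff linear_neg[OF assms(1)] linear_neg[OF assms(2)] linear_add[OF assms(2)])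
  moreover have "range ((\<lambda>x. - F x) ^^ k) \<subseteq> span K"
    using assms(4) by (auto simp: funpow_uminus[OF assms(2)] intro: span_scale)
  moreover have "(\<lambda>x. S x + - F x) = T"
    by (simp add: S_def)
  ultimately show "range (T ^^ a) \<subseteq> range (S ^^ (a + 1 - k)) + span K"
    using range_funpow_add_subset[of S "\<lambda>x. - F x" k "span K" a] by simp
qed

lemma closed_range_ess_descent_add_commuting:
  fixes T F :: "'a::banach \<Rightarrow> 'a"
  assumes T: "bounded_linear T" and F: "bounded_linear F" and comm: "T \<circ> F = F \<circ> T"
    and K: "finite K" "range (F ^^ k) \<subseteq> span K"
    and desc: "closed_range_ess_descent T n" and "n + k < m"
  shows "closed_range_ess_descent (\<lambda>x. T x + F x) m"
proof -
  define S where "S = (\<lambda>x. T x + F x)"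
  note S_T = range_funpow_add_commuting(1)[OF bounded_linear.linear[OF T] bounded_linear.linear[OF F] comm K(2),
      folded S_def]
  note T_S = range_funpow_add_commuting(2)[OF bounded_linear.linear[OF T] bounded_linear.linear[OF F] comm K(2),
      folded S_def]
  have T_T: "subset_mod_fin_dim (range (T ^^ a)) (range (T ^^ b))" if "n \<le> a" for a b
    using subset_mod_fin_dim_range_funpow[OF T desc that] .
  define Y where "Y = range (T ^^ (m + 1 - k)) + span K"
  have "closed (range (S ^^ m))"
  proof (rule closed_range_if_subset_mod_fin_dim)
    show "bounded_linear (S ^^ m)"
      using T F by (simp add: S_def bounded_linear_add bounded_linear_funpow)
    have "subspace (range (T ^^ (m + 1 - k)))"
      using linear_subspace_image[OF bounded_linear.linear[OF bounded_linear_funpow[OF T]] subspace_UNIV] .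
    moreover have "closed (range (T ^^ (m + 1 - k)))"
      using closed_range_ess_descent_mono[OF T desc, of "m + 1 - k"] \<open>n + k < m\<close>
      unfolding closed_range_ess_descent_def by simp
    ultimately show "closed Y" "subspace Y"
      using K(1) by (simp_all add: Y_def closed_plus_span subspace_set_plus)
    show "range (S ^^ m) \<subseteq> Y"
      unfolding Y_def by (rule S_T)
    have "subset_mod_fin_dim (range (T ^^ (m + 1 - k))) (range (T ^^ (m + k - 1)))"
      using T_T \<open>n + k < m\<close> by simp
    also have "subset_mod_fin_dim \<dots> (range (S ^^ m))"
      using T_S[of "m + k - 1"] \<open>n + k < m\<close> K(1) by (intro subset_mod_fin_dimI) simp_all
    finally show "subset_mod_fin_dim Y (range (S ^^ m))"
      unfolding Y_def using K(1) by (rule subset_mod_fin_dim_plus_span)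
  qed
  moreover have "subset_mod_fin_dim (range (S ^^ m)) (range (S ^^ Suc m))"
  proof -
    have "subset_mod_fin_dim (range (S ^^ m)) (range (T ^^ (m + 1 - k)))"
      using S_T K(1) by (rule subset_mod_fin_dimI[rotated])
    also have "subset_mod_fin_dim \<dots> (range (T ^^ (m + k)))"
      using T_T \<open>n + k < m\<close> by simp
    also have "subset_mod_fin_dim \<dots> (range (S ^^ Suc m))"
      using T_S[of "m + k"] K(1) by (intro subset_mod_fin_dimI) simp_all
    finally show ?thesis .
  qed
  ultimately show ?thesis
    unfolding closed_range_ess_descent_def S_def by blast
qed

lemma scaleC_eq_Re_Im: "scaleC c y = Re c *\<^sub>R y + Im c *\<^sub>R scaleC \<i> (y::'a::complex_banach)"
proof -
  have "c = complex_of_real (Re c) + complex_of_real (Im c) * \<i>"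
    by (simp add: complex_eq_iff)
  then show ?thesis
    by (metis scaleC_add_left scaleC_scaleC scaleR_scaleC)
qed

lemma cspan_subset_span: "cspan E \<subseteq> span (E \<union> scaleC \<i> ` (E::'a::complex_banach set))"
proof
  fix x assume "x \<in> cspan E"
  then obtain E' c where x: "x = (\<Sum>y\<in>E'. scaleC (c y) y)" "E' \<subseteq> E"
    unfolding cspan_def by blast
  have "scaleC (c y) y \<in> span (E \<union> scaleC \<i> ` E)" if "y \<in> E'" for y
  proof -
    have "Re (c y) *\<^sub>R y + Im (c y) *\<^sub>R scaleC \<i> y \<in> span (E \<union> scaleC \<i> ` E)"
      using that x(2) by (intro span_add span_scale span_base) auto
    then show ?thesis
      by (simp only: scaleC_eq_Re_Im[of "c y" y, symmetric])
  qed
  then show "x \<in> span (E \<union> scaleC \<i> ` E)"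
    unfolding x(1) by (rule span_sum)
qed

lemma span_subset_cspan:
  fixes D :: "'a::complex_banach set"
  assumes "finite D"
  shows "span D \<subseteq> cspan D"
proof
  fix x assume "x \<in> span D"
  then obtain u where "x = (\<Sum>v\<in>D. u v *\<^sub>R v)"
    using span_finite[OF assms] by auto
  then have "x = (\<Sum>v\<in>D. scaleC (complex_of_real (u v)) v)"
    by (simp add: scaleR_scaleC)
  then show "x \<in> cspan D"
    unfolding cspan_def
    by (intro CollectI exI[of _ D] exI[where x="\<lambda>v. complex_of_real (u v)"]) (simp add: assms)
qed

lemma finite_rank_range_subset_span:
  assumes "finite_rank f"
  obtains K where "finite K" "range f \<subseteq> span K"
proof -
  obtain E where "finite E" "range f \<subseteq> cspan E"
    using assms unfolding finite_rank_def by blast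
  then show ?thesis
    using that[of "E \<union> scaleC \<i> ` E"] cspan_subset_span[of E] by blast
qed

lemma bounded_clinear_op_add:
  "bounded_clinear_op f \<Longrightarrow> bounded_clinear_op g \<Longrightarrow> bounded_clinear_op (\<lambda>x. f x + g x)"
  unfolding bounded_clinear_op_def by (simp add: bounded_linear_add scaleC_add_right)

lemma bounded_clinear_op_funpow: "bounded_clinear_op f \<Longrightarrow> bounded_clinear_op (f ^^ n)"
proof (induction n)
  case 0
  then show ?case unfolding bounded_clinear_op_def by (simp add: id_def)
next
  case (Suc n)
  then show ?case unfolding bounded_clinear_op_def
    using bounded_linear_compose[of f "f ^^ n"] by (simp add: comp_def)
qed

lemma subspace_range_bounded_clinear_op: "bounded_clinear_op G \<Longrightarrow> subspace (range G)"
  unfolding bounded_clinear_op_def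
  using linear_subspace_image[OF bounded_linear.linear subspace_UNIV] by blast

lemma cspan_subset_range:
  assumes "bounded_clinear_op G" "E \<subseteq> range G"
  shows "cspan E \<subseteq> range G"
proof
  fix z assume "z \<in> cspan E"
  then obtain E' c where z: "z = (\<Sum>y\<in>E'. scaleC (c y) y)" "E' \<subseteq> E"
    unfolding cspan_def by blast
  have "scaleC (c y) y \<in> range G" if y: "y \<in> E'" for y
  proof -
    obtain w where "y = G w"
      using y z(2) assms(2) by blast
    then have "scaleC (c y) y = G (scaleC (c y) w)"
      using assms(1) unfolding bounded_clinear_op_def by simp
    then show ?thesis by simp
  qed
  then show "z \<in> range G"
    unfolding z(1) using subspace_range_bounded_clinear_op[OF assms(1)] by (intro subspace_sum)
qed

lemma lower_semi_fredholm_on_iff: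
  "lower_semi_fredholm_on M S \<longleftrightarrow> closed (S ` M) \<and> (\<exists>E. finite E \<and> E \<subseteq> M \<and> M = S ` M + cspan E)"
  unfolding lower_semi_fredholm_on_def set_plus_eq_setcompr ..

lemma closed_range_ess_descent_if_lower_semi_fredholm_on:
  fixes T :: "'a::complex_banach \<Rightarrow> 'a"
  assumes "closed (range (T ^^ n))" "lower_semi_fredholm_on (range (T ^^ n)) T"
  shows "closed_range_ess_descent T n"
proof -
  obtain E where E: "finite E" "range (T ^^ n) = range (T ^^ Suc n) + cspan E"
    using assms(2) unfolding lower_semi_fredholm_on_iff image_range_funpow by blast
  have "range (T ^^ Suc n) + cspan E \<subseteq> range (T ^^ Suc n) + span (E \<union> scaleC \<i> ` E)"
    by (intro set_plus_mono2 order_refl cspan_subset_span)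
  then have "subset_mod_fin_dim (range (T ^^ n)) (range (T ^^ Suc n))"
    using E by (intro subset_mod_fin_dimI[of "E \<union> scaleC \<i> ` E"]) auto
  then show ?thesis
    using assms(1) unfolding closed_range_ess_descent_def by blast
qed

lemma lower_semi_fredholm_on_if_closed_range_ess_descent:
  fixes T :: "'a::complex_banach \<Rightarrow> 'a"
  assumes "bounded_clinear_op T" "closed_range_ess_descent T n"
  shows "lower_semi_fredholm_on (range (T ^^ n)) T"
proof -
  have T: "bounded_clinear_op (T ^^ m)" for m
    using assms(1) by (rule bounded_clinear_op_funpow)
  then have sub: "subspace (range (T ^^ m))" for m
    by (rule subspace_range_bounded_clinear_op)
  have "bounded_linear T"
    using assms(1) unfolding bounded_clinear_op_def by blast
  from closed_range_ess_descent_Suc[OF this assms(2)] have closed: "closed (T ` range (T ^^ n))"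
    unfolding closed_range_ess_descent_def image_range_funpow by blast
  obtain D where D: "finite D" "range (T ^^ n) \<subseteq> range (T ^^ Suc n) + span D"
    using assms(2) unfolding closed_range_ess_descent_def subset_mod_fin_dim_def by blast
  have "range (T ^^ Suc n) \<subseteq> range (T ^^ n)"
    by (rule range_funpow_mono) simp
  then obtain D' where D': "finite D'" "D' \<subseteq> range (T ^^ n)" "range (T ^^ n) = range (T ^^ Suc n) + span D'"
    using subspace_finite_complement[OF sub sub _ D(2,1)] by metis
  have "range (T ^^ n) = T ` range (T ^^ n) + cspan D'"
  proof
    show "range (T ^^ n) \<subseteq> T ` range (T ^^ n) + cspan D'"
      unfolding image_range_funpow using D'(3) span_subset_cspan[OF D'(1)]
      by (metis order_refl set_plus_mono2)
    have "T ` range (T ^^ n) + cspan D' \<subseteq> range (T ^^ n) + range (T ^^ n)"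
      unfolding image_range_funpow
      by (intro set_plus_mono2 range_funpow_mono cspan_subset_range[OF T D'(2)]) simp
    also have "\<dots> = range (T ^^ n)"
      using sub by (intro subspace_plus_absorb) (auto simp: subspace_0)
    finally show "T ` range (T ^^ n) + cspan D' \<subseteq> range (T ^^ n)" .
  qed
  then show ?thesis
    unfolding lower_semi_fredholm_on_iff using closed D'(1,2) by blast
qed

lemma lower_semi_B_fredholm_iff_closed_range_ess_descent:
  fixes T :: "'a::complex_banach \<Rightarrow> 'a"
  assumes "bounded_clinear_op T"
  shows "lower_semi_B_fredholm T \<longleftrightarrow> (\<exists>n. closed_range_ess_descent T n)"
  unfolding lower_semi_B_fredholm_def
  using closed_range_ess_descent_if_lower_semi_fredholm_on
    lower_semi_fredholm_on_if_closed_range_ess_descent[OF assms]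
  unfolding closed_range_ess_descent_def by meson

theorem lemma2p10:
  fixes T F :: "'a::complex_banach \<Rightarrow> 'a"
  assumes "infinite_dimensional TYPE('a)"
    and "bounded_clinear_op F"
    and "\<exists>n::nat. finite_rank (F ^^ n)"
    and "bounded_clinear_op T"
    and "lower_semi_B_fredholm T"
    and "T \<circ> F = F \<circ> T"
  shows "lower_semi_B_fredholm (\<lambda>x. T x + F x)"
proof -
  have T: "bounded_linear T" and F: "bounded_linear F"
    using assms(2,4) unfolding bounded_clinear_op_def by blast+
  obtain n where "closed_range_ess_descent T n"
    using assms(4,5) lower_semi_B_fredholm_iff_closed_range_ess_descent by blast
  moreover obtain k K where "finite K" "range (F ^^ k) \<subseteq> span K"
    using assms(3) finite_rank_range_subset_span by metis
  ultimately have "closed_range_ess_descent (\<lambda>x. T x + F x) (n + k + 1)"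
    using T F assms(6) by (intro closed_range_ess_descent_add_commuting) auto
  moreover have "bounded_clinear_op (\<lambda>x. T x + F x)"
    using assms(2,4) by (rule bounded_clinear_op_add[rotated])
  ultimately show ?thesis
    using lower_semi_B_fredholm_iff_closed_range_ess_descent by blast
qed

end
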